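(* For any positive integers $f,l$ and any choice of integers $(M_C)_C$ for which the hypercube Hamiltonian $H=\sum_C\bigl(\sum_{i\in C}S_i-M_C\bigr)^2$ has at least one zero energy assignment, any two distinct zero energy assignments differ in at least $2^f$ variables; consequently every global minimum of $H$ is a $(2^f-1)$-minimum.
   Context: Fix positive integers $f,l$ and let $N=l^f$. The variables $S_i\in\{-1,+1\}$ are indexed by vectors $i=(x_1,\dots,x_f)$ with $x_a\in\{1,\dots,l\}$. A column $C$ is specified by an index $b\in\{1,\dots,f\}$ and integers $y_a\in\{1,\dots,l\}$ for all $a\neq b$; a variable $(x_1,\dots,x_f)$ lies in $C$ iff $x_a=y_a$ for all $a\neq b$. Given an integer $M_C$ for each column, $H(S)=\sum_C\bigl(\sum_{i\in C}S_i-M_C\bigr)^2$. A zero energy assignment is an $S$ with $\sum_{i\in C}S_i=M_C$ for every column $C$. A global minimum is an assignment minimizing $H$. For an integer $k\geq1$, an assignment $A$ is a $k$-minimum of $H$ if every assignment differing from $A$ in at least one and at most $k$ variables has a strictly larger value of $H$ than $A$. *)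

theory Defs
  imports "HOL-Library.FuncSet"
begin

text \<open>Variables are indexed by vectors (x_0,...,x_{f-1}) with entries in {1..l},
  represented as extensional functions on {0..<f}.\<close>
definition vars :: "nat \<Rightarrow> nat \<Rightarrow> (nat \<Rightarrow> nat) set" where
  "vars f l = PiE {0..<f} (\<lambda>_. {1..l})"

text \<open>A column is a pair (b, y): direction b < f and fixed coordinates y on all a \<noteq> b.\<close>
definition columns :: "nat \<Rightarrow> nat \<Rightarrow> (nat \<times> (nat \<Rightarrow> nat)) set" where
  "columns f l = {(b, y). b < f \<and> y \<in> PiE ({0..<f} - {b}) (\<lambda>_. {1..l})}"

definition column_vars :: "nat \<Rightarrow> nat \<Rightarrow> nat \<times> (nat \<Rightarrow> nat) \<Rightarrow> (nat \<Rightarrow> nat) set" where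
  "column_vars f l C = {x \<in> vars f l. \<forall>a \<in> {0..<f} - {fst C}. x a = snd C a}"

definition assignments :: "nat \<Rightarrow> nat \<Rightarrow> ((nat \<Rightarrow> nat) \<Rightarrow> int) set" where
  "assignments f l = PiE (vars f l) (\<lambda>_. {-1, 1})"

definition H :: "nat \<Rightarrow> nat \<Rightarrow> (nat \<times> (nat \<Rightarrow> nat) \<Rightarrow> int) \<Rightarrow> ((nat \<Rightarrow> nat) \<Rightarrow> int) \<Rightarrow> int" where
  "H f l M S = (\<Sum>C\<in>columns f l. ((\<Sum>i\<in>column_vars f l C. S i) - M C)^2)"

definition zero_energy where
  "zero_energy f l M S \<longleftrightarrow> S \<in> assignments f l \<and>
     (\<forall>C\<in>columns f l. (\<Sum>i\<in>column_vars f l C. S i) = M C)"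

definition global_min where
  "global_min f l M S \<longleftrightarrow> S \<in> assignments f l \<and> (\<forall>T\<in>assignments f l. H f l M S \<le> H f l M T)"

definition hamming :: "nat \<Rightarrow> nat \<Rightarrow> ((nat \<Rightarrow> nat) \<Rightarrow> int) \<Rightarrow> ((nat \<Rightarrow> nat) \<Rightarrow> int) \<Rightarrow> nat" where
  "hamming f l S T = card {i \<in> vars f l. S i \<noteq> T i}"

definition k_min where
  "k_min f l M k A \<longleftrightarrow> A \<in> assignments f l \<and>
     (\<forall>T\<in>assignments f l. 1 \<le> hamming f l A T \<and> hamming f l A T \<le> k \<longrightarrow> H f l M A < H f l M T)"

end

theory Submission
  imports Defs
begin

text \<open>The difference D = S - T of two zero energy assignments sums to zero along every
  column. Such a D cannot have a single nonzero entry on a column, so from any point of its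
  support one finds a second support point differing from it in any prescribed direction b.
  Splitting a subcube along b into disjoint slices therefore doubles the lower bound on the
  support, and induction over the free directions gives at least 2^f support points.
  A global minimum has energy 0 as soon as some zero energy assignment exists, so any
  competitor of equal energy is itself of zero energy and hence at distance at least 2^f.\<close>

definition line :: "nat \<Rightarrow> nat \<Rightarrow> nat \<Rightarrow> (nat \<Rightarrow> nat) \<Rightarrow> (nat \<Rightarrow> nat) set" where
  "line f l b x = {y \<in> vars f l. \<forall>a\<in>{0..<f} - {b}. y a = x a}"

definition subcube :: "nat \<Rightarrow> nat \<Rightarrow> nat set \<Rightarrow> (nat \<Rightarrow> nat) \<Rightarrow> (nat \<Rightarrow> nat) set" where
  "subcube f l A z = {x \<in> vars f l. \<forall>a\<in>{0..<f} - A. x a = z a}"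

lemma finite_vars: "finite (vars f l)"
  unfolding vars_def by (intro finite_PiE) auto

lemma finite_columns: "finite (columns f l)"
proof -
  have "columns f l \<subseteq> Sigma {0..<f} (\<lambda>b. PiE ({0..<f} - {b}) (\<lambda>_. {1..l}))"
    unfolding columns_def by (simp add: subset_iff)
  moreover have "finite (Sigma {0..<f} (\<lambda>b. PiE ({0..<f} - {b}) (\<lambda>_. {1..l})))"
    by (intro finite_SigmaI finite_PiE) auto
  ultimately show ?thesis by (rule finite_subset)
qed

lemma line_in_columns:
  assumes "x \<in> vars f l" "b < f"
  shows "(b, restrict x ({0..<f} - {b})) \<in> columns f l"
    and "column_vars f l (b, restrict x ({0..<f} - {b})) = line f l b x"
  using assms unfolding columns_def vars_def column_vars_def line_def by auto

lemma line_eqI: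
  assumes "y \<in> line f l b x" "x \<in> vars f l" "y b = x b"
  shows "y = x"
proof
  fix a
  show "y a = x a"
  proof (cases "a < f")
    case True
    then show ?thesis using assms by (cases "a = b") (auto simp: line_def)
  next
    case False
    then show ?thesis using assms by (auto simp: line_def vars_def PiE_def extensional_def)
  qed
qed

lemma line_zero_sum_second_point:
  fixes D :: "(nat \<Rightarrow> nat) \<Rightarrow> 'a::comm_monoid_add"
  assumes "sum D (line f l b x) = 0" "x \<in> vars f l" "D x \<noteq> 0"
  obtains y where "y \<in> line f l b x" "y b \<noteq> x b" "D y \<noteq> 0"
proof -
  have x_in: "x \<in> line f l b x" using assms(2) by (simp add: line_def)
  have "\<exists>y\<in>line f l b x - {x}. D y \<noteq> 0"
  proof (rule ccontr)
    assume "\<not> ?thesis"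
    then have "sum D (line f l b x - {x}) = 0" by simp
    moreover have "sum D (line f l b x) = D x + sum D (line f l b x - {x})"
      using finite_vars x_in by (simp add: line_def sum.remove)
    ultimately show False using assms by simp
  qed
  then obtain y where "y \<in> line f l b x" "y \<noteq> x" "D y \<noteq> 0" by blast
  with line_eqI[OF _ assms(2)] show ?thesis using that by blast
qed

lemma card_support_subcube_ge:
  fixes D :: "(nat \<Rightarrow> nat) \<Rightarrow> 'a::comm_monoid_add"
  assumes "finite A" "A \<subseteq> {0..<f}"
    and "\<And>x b. x \<in> vars f l \<Longrightarrow> b \<in> A \<Longrightarrow> sum D (line f l b x) = 0"
    and "x \<in> subcube f l A z" "D x \<noteq> 0"
  shows "2 ^ card A \<le> card {y \<in> subcube f l A z. D y \<noteq> 0}"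
  using assms
proof (induction A arbitrary: z x rule: finite_induct)
  case empty
  have "finite {y \<in> subcube f l {} z. D y \<noteq> 0}"
    using finite_vars by (simp add: subcube_def)
  moreover have "x \<in> {y \<in> subcube f l {} z. D y \<noteq> 0}" using empty by simp
  ultimately show ?case by (simp add: Suc_le_eq card_gt_0_iff) blast
next
  case (insert b A)
  let ?supp = "\<lambda>z. {y \<in> subcube f l A z. D y \<noteq> 0}"
  have x_var: "x \<in> vars f l" using insert.prems(3) by (simp add: subcube_def)
  have line_sum: "sum D (line f l b x) = 0" using insert.prems(2) x_var by blast
  obtain x' where x': "x' \<in> line f l b x" "x' b \<noteq> x b" "D x' \<noteq> 0"
    using line_zero_sum_second_point[OF line_sum x_var insert.prems(4)] by blast
  have x'_var: "x' \<in> vars f l" using x'(1) by (simp add: line_def)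
  have IH: "2 ^ card A \<le> card (?supp w)" if "w \<in> vars f l" "D w \<noteq> 0" for w
    using insert that by (intro insert.IH[of w]) (auto simp: subcube_def)
  have disjoint: "?supp x \<inter> ?supp x' = {}"
    using x'(2) insert.prems(1) insert.hyps(2) by (auto simp: subcube_def)
  have slice_subset: "?supp w \<subseteq> {y \<in> subcube f l (insert b A) z. D y \<noteq> 0}"
    if w_z: "\<And>a. a \<in> {0..<f} - insert b A \<Longrightarrow> w a = z a" for w
  proof
    fix y assume y: "y \<in> ?supp w"
    have "y a = z a" if "a \<in> {0..<f} - insert b A" for a
      using y w_z[OF that] that by (auto simp: subcube_def)
    with y show "y \<in> {y \<in> subcube f l (insert b A) z. D y \<noteq> 0}" by (auto simp: subcube_def)
  qed
  have x_z: "x a = z a" and x'_x: "x' a = x a" if "a \<in> {0..<f} - insert b A" for a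
    using insert.prems(3) x'(1) that by (auto simp: subcube_def line_def)
  have "?supp x \<union> ?supp x' \<subseteq> {y \<in> subcube f l (insert b A) z. D y \<noteq> 0}"
    by (intro Un_least slice_subset) (simp_all add: x_z x'_x)
  moreover have "finite {y \<in> subcube f l (insert b A) z. D y \<noteq> 0}"
    using finite_vars by (simp add: subcube_def)
  ultimately have "card (?supp x \<union> ?supp x') \<le> card {y \<in> subcube f l (insert b A) z. D y \<noteq> 0}"
    by (rule card_mono[rotated])
  moreover have "card (?supp x \<union> ?supp x') = card (?supp x) + card (?supp x')"
    using finite_vars disjoint by (intro card_Un_disjoint) (auto simp: subcube_def)
  moreover have "2 ^ card (insert b A) = 2 ^ card A + (2::nat) ^ card A"
    using insert.hyps by simp
  ultimately show ?case
    using IH[OF x_var insert.prems(4)] IH[OF x'_var x'(3)] by linarith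
qed

lemma zero_energy_line_sum:
  assumes "zero_energy f l M S" "x \<in> vars f l" "b < f"
  shows "sum S (line f l b x) = M (b, restrict x ({0..<f} - {b}))"
proof -
  have "sum S (column_vars f l (b, restrict x ({0..<f} - {b}))) = M (b, restrict x ({0..<f} - {b}))"
    using assms(1) line_in_columns(1)[OF assms(2,3)] unfolding zero_energy_def by blast
  then show ?thesis by (simp only: line_in_columns(2)[OF assms(2,3)])
qed

lemma hamming_zero_energy_ge:
  assumes S: "zero_energy f l M S" and T: "zero_energy f l M T" and "S \<noteq> T"
  shows "2 ^ f \<le> hamming f l S T"
proof -
  have "S \<in> assignments f l" "T \<in> assignments f l"
    using S T by (simp_all add: zero_energy_def)
  with \<open>S \<noteq> T\<close> have "\<exists>x\<in>vars f l. S x \<noteq> T x"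
    unfolding assignments_def using PiE_ext by blast
  then obtain x where x: "x \<in> vars f l" "S x - T x \<noteq> 0" by auto
  have "sum (\<lambda>y. S y - T y) (line f l b y) = 0" if "y \<in> vars f l" "b \<in> {0..<f}" for y b
    using zero_energy_line_sum[OF S that(1)] zero_energy_line_sum[OF T that(1)] that(2)
    by (simp add: sum_subtractf)
  then have "2 ^ card {0..<f} \<le> card {y \<in> subcube f l {0..<f} x. S y - T y \<noteq> 0}"
    using x by (intro card_support_subcube_ge) (auto simp: subcube_def)
  moreover have "{y \<in> subcube f l {0..<f} x. S y - T y \<noteq> 0} = {i \<in> vars f l. S i \<noteq> T i}"
    by (auto simp: subcube_def)
  ultimately show ?thesis by (simp add: hamming_def)
qed

lemma H_nonneg: "0 \<le> H f l M S"
  unfolding H_def by (intro sum_nonneg) auto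

lemma H_eq_0_iff_zero_energy:
  assumes "S \<in> assignments f l"
  shows "H f l M S = 0 \<longleftrightarrow> zero_energy f l M S"
  using assms finite_columns by (simp add: H_def zero_energy_def sum_nonneg_eq_0_iff)

lemma global_min_zero_energy:
  assumes "global_min f l M S" "zero_energy f l M S0"
  shows "zero_energy f l M S"
proof -
  have S: "S \<in> assignments f l" using assms(1) by (simp add: global_min_def)
  have "H f l M S \<le> H f l M S0"
    using assms unfolding global_min_def zero_energy_def by blast
  also have "H f l M S0 = 0"
    using assms(2) H_eq_0_iff_zero_energy by (simp add: zero_energy_def)
  finally have "H f l M S = 0" using H_nonneg by (rule antisym)
  with S show ?thesis using H_eq_0_iff_zero_energy by blast
qed

lemma global_min_k_min:
  assumes "global_min f l M S" "zero_energy f l M S0"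
  shows "k_min f l M (2^f - 1) S"
  unfolding k_min_def
proof (intro conjI ballI impI)
  have S: "zero_energy f l M S" using assms by (rule global_min_zero_energy)
  then show S_assignment: "S \<in> assignments f l" by (simp add: zero_energy_def)
  fix T assume T: "T \<in> assignments f l" and d: "1 \<le> hamming f l S T \<and> hamming f l S T \<le> 2^f - 1"
  have "S \<noteq> T" using d by (auto simp: hamming_def)
  have "\<not> zero_energy f l M T"
  proof
    assume "zero_energy f l M T"
    then have "2^f \<le> hamming f l S T" using hamming_zero_energy_ge S \<open>S \<noteq> T\<close> by blast
    moreover have "(1::nat) \<le> 2^f" by simp
    ultimately show False using d by linarith
  qed
  then have "H f l M T \<noteq> 0" using H_eq_0_iff_zero_energy T by blast
  moreover have "H f l M S = 0" using H_eq_0_iff_zero_energy S S_assignment by blast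
  ultimately show "H f l M S < H f l M T" using H_nonneg[of f l M T] by simp
qed

theorem mainTheorem4:
  fixes f l :: nat and M :: "nat \<times> (nat \<Rightarrow> nat) \<Rightarrow> int"
  assumes "f \<ge> 1" and "l \<ge> 1"
    and "\<exists>S. zero_energy f l M S"
  shows "(\<forall>S T. zero_energy f l M S \<and> zero_energy f l M T \<and> S \<noteq> T \<longrightarrow> hamming f l S T \<ge> 2^f)
       \<and> (\<forall>S. global_min f l M S \<longrightarrow> k_min f l M (2^f - 1) S)"
  using hamming_zero_energy_ge global_min_k_min assms(3) by blast

end
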